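(* Let $w_0\in\mathcal C^2(\mathbb R)$ with $w_0'$ bounded, and assume the limits $w_0'(\pm\infty):=\lim_{x\to\pm\infty}w_0'(x)$ exist and are finite. Let $w$ be a classical solution of problem (P) on $[0,t_* )\times\mathbb R$ (with $(r,\ell)$ of class $\mathcal C^1$). Then for every $t\in[0,t_* )$, $$\lim_{x\to\pm\infty}w_{,x}(t,x)=w_0'(\pm\infty),\qquad \lim_{x\to\pm\infty}w_{,t}(t,x)=0 .$$
   Context: Let $Q(\xi):=\sqrt{1+\xi^2}$ and $L(u):=\int_0^uQ(\xi)\,d\xi=\tfrac12\big(u\sqrt{1+u^2}+\operatorname{arcsinh}u\big)$, a strictly increasing odd bijection of $\mathbb R$. Problem (P) is the Cauchy problem $w_{,tt}-Q^2(w_{,x})\,w_{,xx}=0$ on $[0,\infty)\times\mathbb R$, $w(0,x)=w_0(x)$, $w_{,t}(0,x)=0$, where subscripts after a comma denote partial derivatives. The Riemann invariants are $r:=w_{,t}-L(w_{,x})$, $\ell:=w_{,t}+L(w_{,x})$; with $\eta:=r-\ell$ one has $w_{,x}=L^{-1}(-\eta/2)$, and one sets $k(\eta):=Q(L^{-1}(-\eta/2))$. Then $(r,\ell)$ solves $r_{,t}+k(r-\ell)r_{,x}=0$, $\ell_{,t}-k(r-\ell)\ell_{,x}=0$, with $r(0,x)=r_0(x):=-L(w_0'(x))$, $\ell(0,x)=\ell_0(x):=L(w_0'(x))=-r_0(x)$. $[0,t_* )$ denotes the maximal interval of existence of the $\mathcal C^1$ solution $(r,\ell)$. *)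

theory Defs
  imports "HOL-Analysis.Analysis"
begin

definition Q :: "real \<Rightarrow> real" where
  "Q \<xi> = sqrt (1 + \<xi>\<^sup>2)"

definition L :: "real \<Rightarrow> real" where
  "L u = (u * sqrt (1 + u\<^sup>2) + arsinh u) / 2"

text \<open>Classical (C^2) solution of problem (P) on [0,T) x R.
  wt and wx are the partial derivatives w_t and w_x of w; all second-order
  partial derivatives exist and are continuous on [0,T) x R (time derivatives
  at t = 0 are one-sided), so in particular r = wt - L wx and l = wt + L wx are C^1.\<close>
definition classical_solution_P ::
  "(real \<Rightarrow> real) \<Rightarrow> real \<Rightarrow> (real \<Rightarrow> real \<Rightarrow> real)
     \<Rightarrow> (real \<Rightarrow> real \<Rightarrow> real) \<Rightarrow> (real \<Rightarrow> real \<Rightarrow> real) \<Rightarrow> bool" where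
  "classical_solution_P w0 T w wt wx \<longleftrightarrow>
     (\<forall>t\<in>{0..<T}. \<forall>x.
        ((\<lambda>s. w s x) has_real_derivative wt t x) (at t within {0..<T}) \<and>
        ((\<lambda>y. w t y) has_real_derivative wx t x) (at x)) \<and>
     (\<exists>wtt wtx wxt wxx.
        (\<forall>t\<in>{0..<T}. \<forall>x.
           ((\<lambda>s. wt s x) has_real_derivative wtt t x) (at t within {0..<T}) \<and>
           ((\<lambda>y. wt t y) has_real_derivative wtx t x) (at x) \<and>
           ((\<lambda>s. wx s x) has_real_derivative wxt t x) (at t within {0..<T}) \<and>
           ((\<lambda>y. wx t y) has_real_derivative wxx t x) (at x) \<and>
           wtt t x - (Q (wx t x))\<^sup>2 * wxx t x = 0) \<and>
        continuous_on ({0..<T} \<times> UNIV) (\<lambda>(t, x). wt t x) \<and>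
        continuous_on ({0..<T} \<times> UNIV) (\<lambda>(t, x). wx t x) \<and>
        continuous_on ({0..<T} \<times> UNIV) (\<lambda>(t, x). wtt t x) \<and>
        continuous_on ({0..<T} \<times> UNIV) (\<lambda>(t, x). wtx t x) \<and>
        continuous_on ({0..<T} \<times> UNIV) (\<lambda>(t, x). wxt t x) \<and>
        continuous_on ({0..<T} \<times> UNIV) (\<lambda>(t, x). wxx t x)) \<and>
     (\<forall>x. w 0 x = w0 x) \<and>
     (\<forall>x. wt 0 x = 0)"

end

theory Submission imports Defs begin

text \<open>The Riemann invariants \<open>r = w\<^sub>t - L(w\<^sub>x)\<close> and \<open>l = w\<^sub>t + L(w\<^sub>x)\<close> are transported with
  speeds \<open>\<plusminus>Q(w\<^sub>x)\<close>. On a backward cone whose slope dominates the speed, a maximum principle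
  confines the value of an invariant at the apex to the range of its initial values on the base.
  The speed is itself controlled by the invariants, since \<open>\<bar>w\<^sub>x\<bar> \<le> \<bar>L(w\<^sub>x)\<bar> = \<bar>l - r\<bar>/2\<close>;
  a continuity argument in time shows that cones of slope \<open>M + 2\<close> are admissible, where \<open>M\<close>
  bounds \<open>\<bar>L(w\<^sub>0')\<bar>\<close>. Thus \<open>r(t, x)\<close> and \<open>l(t, x)\<close> depend only on the initial data within
  distance \<open>(M + 2) t\<close> of \<open>x\<close>, so they inherit the limits \<open>\<mp>L(w\<^sub>0'(\<plusminus>\<infinity>))\<close> of the initial
  invariants, and \<open>w\<^sub>t = (r + l)/2\<close>, \<open>L(w\<^sub>x) = (l - r)/2\<close> give the claim.\<close>

section \<open>The functions \<open>L\<close> and \<open>Q\<close>\<close>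

lemma has_real_derivative_L: "(L has_real_derivative Q u) (at u)"
proof -
  have pos: "0 < 1 + u\<^sup>2"
    by (simp add: add_pos_nonneg)
  have der: "((\<lambda>u. (u * sqrt (1 + u\<^sup>2) + arsinh u) / 2) has_real_derivative
      (sqrt (1 + u\<^sup>2) + u * (2 * u / (2 * sqrt (1 + u\<^sup>2))) + 1 / sqrt (u\<^sup>2 + 1)) / 2) (at u)"
    using pos by (auto intro!: derivative_eq_intros simp: divide_simps)
  have eq: "(sqrt (1 + u\<^sup>2) + u * (2 * u / (2 * sqrt (1 + u\<^sup>2))) + 1 / sqrt (u\<^sup>2 + 1)) / 2
      = sqrt (1 + u\<^sup>2)"
    using pos by (simp add: field_simps power2_eq_square)
  show ?thesis
    using der unfolding eq L_def[abs_def] Q_def .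
qed

lemma has_real_derivative_L_comp [derivative_intros]:
  "(g has_real_derivative g') (at x within S) \<Longrightarrow>
    ((\<lambda>x. L (g x)) has_real_derivative Q (g x) * g') (at x within S)"
  by (rule DERIV_chain2[OF has_real_derivative_L])

lemma isCont_L: "isCont L u"
  using has_real_derivative_L by (rule DERIV_isCont)

lemma Q_ge_1: "1 \<le> Q u"
  unfolding Q_def by simp

lemma Q_le_1_plus_abs: "Q u \<le> 1 + \<bar>u\<bar>"
proof -
  have "1 + u\<^sup>2 \<le> (1 + \<bar>u\<bar>)\<^sup>2"
    by (simp add: power2_eq_square algebra_simps)
  then show ?thesis
    unfolding Q_def using real_sqrt_le_mono by fastforce
qed

lemma L_diff_ge: "u \<le> v \<Longrightarrow> v - u \<le> L v - L u"
proof (cases "u = v")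
  case False
  assume "u \<le> v"
  with False obtain z where "L v - L u = (v - u) * Q z"
    using MVT2[of u v L Q] has_real_derivative_L by fastforce
  with \<open>u \<le> v\<close> show ?thesis
    using Q_ge_1[of z] mult_left_mono[of 1 "Q z" "v - u"] by simp
qed simp

lemma mono_L: "u \<le> v \<Longrightarrow> L u \<le> L v"
  using L_diff_ge by fastforce

lemma abs_diff_le_abs_L_diff: "\<bar>u - v\<bar> \<le> \<bar>L u - L v\<bar>"
  using L_diff_ge[of u v] L_diff_ge[of v u] by (cases "u \<le> v") auto

lemma L_minus: "L (- u) = - L u"
  by (simp add: L_def field_simps)

lemma abs_L_le: "\<bar>u\<bar> \<le> B \<Longrightarrow> \<bar>L u\<bar> \<le> L B"
  using mono_L[of u B] mono_L[of "- B" u] by (auto simp: L_minus abs_le_iff)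

lemma Q_le_1_plus_abs_L: "Q u \<le> 1 + \<bar>L u\<bar>"
  using Q_le_1_plus_abs[of u] abs_diff_le_abs_L_diff[of u 0] by (simp add: L_def)

lemma tendsto_of_tendsto_L:
  assumes "((\<lambda>x. L (f x)) \<longlongrightarrow> L a) F"
  shows "(f \<longlongrightarrow> a) F"
proof (rule tendstoI)
  fix e :: real
  assume "e > 0"
  with assms have "\<forall>\<^sub>F x in F. dist (L (f x)) (L a) < e"
    by (rule tendstoD)
  then show "\<forall>\<^sub>F x in F. dist (f x) a < e"
    by eventually_elim (metis abs_diff_le_abs_L_diff dist_real_def order.strict_trans1)
qed

section \<open>Calculus in two variables\<close>

lemma mvt_real_within:
  fixes g g' :: "real \<Rightarrow> real"
  assumes "a \<le> b" "{a..b} \<subseteq> S"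
    and "\<And>x. x \<in> {a..b} \<Longrightarrow> (g has_real_derivative g' x) (at x within S)"
  shows "\<exists>\<xi>\<in>{a..b}. g b - g a = g' \<xi> * (b - a)"
  by (rule mvt_very_simple)
    (use assms in \<open>auto simp: has_field_derivative_def intro: has_derivative_subset\<close>)

lemma continuous_on_Times_UNIV_delta:
  fixes g :: "real \<Rightarrow> real \<Rightarrow> real"
  assumes "continuous_on (S \<times> UNIV) (\<lambda>(s, y). g s y)" "t \<in> S" "0 < e"
  obtains \<delta> where "0 < \<delta>"
    and "\<And>s y. s \<in> S \<Longrightarrow> \<bar>s - t\<bar> < \<delta> \<Longrightarrow> \<bar>y - x\<bar> < \<delta> \<Longrightarrow> \<bar>g s y - g t x\<bar> < e"
proof -
  obtain d where d: "0 < d"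
    and near: "\<And>q. q \<in> S \<times> UNIV \<Longrightarrow> dist q (t, x) < d \<Longrightarrow> dist ((\<lambda>(s, y). g s y) q) (g t x) < e"
    using assms unfolding continuous_on_iff by fastforce
  show ?thesis
  proof (rule that[of "d / 2"])
    fix s y
    assume "s \<in> S" "\<bar>s - t\<bar> < d / 2" "\<bar>y - x\<bar> < d / 2"
    moreover have "dist (s, y) (t, x) \<le> \<bar>s - t\<bar> + \<bar>y - x\<bar>"
      using sqrt_sum_squares_le_sum_abs[of "s - t" "y - x"] by (simp add: dist_Pair_Pair dist_real_def)
    ultimately show "\<bar>g s y - g t x\<bar> < e"
      using near[of "(s, y)"] by (simp add: dist_real_def)
  qed (use d in simp)
qed

text \<open>Both mixed partials are difference quotients of the same second difference
  of \<open>w\<close> over the square \<open>[t, t + h] \<times> [x, x + h]\<close>.\<close>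
lemma mixed_partials_mean_value:
  fixes w wt wx wtx wxt :: "real \<Rightarrow> real \<Rightarrow> real"
  assumes d1: "\<forall>t\<in>{0..<T}. \<forall>x. ((\<lambda>s. w s x) has_real_derivative wt t x) (at t within {0..<T}) \<and>
        ((\<lambda>y. w t y) has_real_derivative wx t x) (at x)"
    and d2: "\<forall>t\<in>{0..<T}. \<forall>x. ((\<lambda>y. wt t y) has_real_derivative wtx t x) (at x) \<and>
        ((\<lambda>s. wx s x) has_real_derivative wxt t x) (at t within {0..<T})"
    and h: "0 \<le> t" "0 < h" "t + h < T"
  shows "\<exists>\<sigma>1\<in>{t..t+h}. \<exists>\<xi>1\<in>{x..x+h}. \<exists>\<sigma>2\<in>{t..t+h}. \<exists>\<xi>2\<in>{x..x+h}. wtx \<sigma>1 \<xi>1 = wxt \<sigma>2 \<xi>2"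
proof -
  define \<Delta> where "\<Delta> = w (t+h) (x+h) - w (t+h) x - w t (x+h) + w t x"
  have sub: "{t..t+h} \<subseteq> {0..<T}"
    using h by auto
  obtain \<sigma>1 where \<sigma>1: "\<sigma>1 \<in> {t..t+h}" and "\<Delta> = (wt \<sigma>1 (x+h) - wt \<sigma>1 x) * h"
    using mvt_real_within[of t "t + h" "{0..<T}" "\<lambda>s. w s (x+h) - w s x" "\<lambda>s. wt s (x+h) - wt s x"]
      sub d1 h by (fastforce intro!: derivative_eq_intros simp: \<Delta>_def algebra_simps)
  moreover obtain \<xi>1 where "\<xi>1 \<in> {x..x+h}" and "wt \<sigma>1 (x+h) - wt \<sigma>1 x = wtx \<sigma>1 \<xi>1 * h"
    using mvt_real_within[of x "x + h" UNIV "wt \<sigma>1" "wtx \<sigma>1"] \<sigma>1 sub d2 h by fastforce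
  moreover obtain \<xi>2 where \<xi>2: "\<xi>2 \<in> {x..x+h}" and "\<Delta> = (wx (t+h) \<xi>2 - wx t \<xi>2) * h"
    using mvt_real_within[of x "x + h" UNIV "\<lambda>y. w (t+h) y - w t y" "\<lambda>y. wx (t+h) y - wx t y"]
      d1 h by (fastforce intro!: derivative_eq_intros simp: \<Delta>_def algebra_simps)
  moreover obtain \<sigma>2 where "\<sigma>2 \<in> {t..t+h}" and "wx (t+h) \<xi>2 - wx t \<xi>2 = wxt \<sigma>2 \<xi>2 * h"
    using mvt_real_within[of t "t + h" "{0..<T}" "\<lambda>s. wx s \<xi>2" "\<lambda>s. wxt s \<xi>2"] sub d2 h by fastforce
  ultimately show ?thesis
    using h by force
qed

lemma mixed_partials_eq:
  fixes w wt wx wtx wxt :: "real \<Rightarrow> real \<Rightarrow> real"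
  assumes d1: "\<forall>t\<in>{0..<T}. \<forall>x. ((\<lambda>s. w s x) has_real_derivative wt t x) (at t within {0..<T}) \<and>
        ((\<lambda>y. w t y) has_real_derivative wx t x) (at x)"
    and d2: "\<forall>t\<in>{0..<T}. \<forall>x. ((\<lambda>y. wt t y) has_real_derivative wtx t x) (at x) \<and>
        ((\<lambda>s. wx s x) has_real_derivative wxt t x) (at t within {0..<T})"
    and c1: "continuous_on ({0..<T} \<times> UNIV) (\<lambda>(t, x). wtx t x)"
    and c2: "continuous_on ({0..<T} \<times> UNIV) (\<lambda>(t, x). wxt t x)"
    and t: "t \<in> {0..<T}"
  shows "wtx t x = wxt t x"
proof -
  have close: "\<bar>wtx t x - wxt t x\<bar> < 2 * e" if e: "0 < e" for e
  proof -
    obtain \<delta>1 where \<delta>1: "0 < \<delta>1"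
      "\<And>s y. s \<in> {0..<T} \<Longrightarrow> \<bar>s - t\<bar> < \<delta>1 \<Longrightarrow> \<bar>y - x\<bar> < \<delta>1 \<Longrightarrow> \<bar>wtx s y - wtx t x\<bar> < e"
      using continuous_on_Times_UNIV_delta[OF c1 t e] by blast
    obtain \<delta>2 where \<delta>2: "0 < \<delta>2"
      "\<And>s y. s \<in> {0..<T} \<Longrightarrow> \<bar>s - t\<bar> < \<delta>2 \<Longrightarrow> \<bar>y - x\<bar> < \<delta>2 \<Longrightarrow> \<bar>wxt s y - wxt t x\<bar> < e"
      using continuous_on_Times_UNIV_delta[OF c2 t e] by blast
    define h where "h = min (min \<delta>1 \<delta>2) (T - t) / 2"
    have h: "0 < h" "t + h < T" "h < \<delta>1" "h < \<delta>2"
      using t \<delta>1(1) \<delta>2(1) by (auto simp: h_def min_def field_simps)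
    then obtain \<sigma>1 \<xi>1 \<sigma>2 \<xi>2 where
      "\<sigma>1 \<in> {t..t+h}" "\<xi>1 \<in> {x..x+h}" "\<sigma>2 \<in> {t..t+h}" "\<xi>2 \<in> {x..x+h}" "wtx \<sigma>1 \<xi>1 = wxt \<sigma>2 \<xi>2"
      using mixed_partials_mean_value[OF d1 d2, of t h x] t by auto
    with h t \<delta>1(2)[of \<sigma>1 \<xi>1] \<delta>2(2)[of \<sigma>2 \<xi>2] show ?thesis
      by auto
  qed
  show ?thesis
    using close[of "\<bar>wtx t x - wxt t x\<bar> / 2"] by fastforce
qed

lemma has_derivative_of_partials:
  fixes f ft fx :: "real \<Rightarrow> real \<Rightarrow> real"
  assumes d: "\<forall>s\<in>S. \<forall>y. ((\<lambda>s. f s y) has_real_derivative ft s y) (at s within S) \<and>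
      ((\<lambda>y. f s y) has_real_derivative fx s y) (at y)"
    and c: "continuous_on (S \<times> UNIV) (\<lambda>(s, y). fx s y)"
    and p: "p \<in> S \<times> UNIV"
  shows "((\<lambda>q. f (fst q) (snd q)) has_derivative
      (\<lambda>q. ft (fst p) (snd p) * fst q + fx (fst p) (snd p) * snd q)) (at p within S \<times> UNIV)"
proof -
  obtain s y where p_eq: "p = (s, y)" and s: "s \<in> S"
    using p by auto
  have ds: "((\<lambda>s. f s y) has_derivative (\<lambda>h. ft s y * h)) (at s within S)"
    using d s by (simp add: has_field_derivative_def)
  have dy: "((\<lambda>y. f a y) has_derivative blinfun_apply (blinfun_mult_left (fx a b))) (at b within UNIV)"
    if "a \<in> S" for a b
  proof -
    have "((\<lambda>y. f a y) has_derivative (\<lambda>h. fx a b * h)) (at b)"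
      using d that by (simp add: has_field_derivative_def)
    then show ?thesis
      by (simp add: mult.commute)
  qed
  have "continuous_on (S \<times> UNIV) (\<lambda>(s, y). blinfun_mult_left (fx s y))"
    using bounded_linear.continuous_on[OF bounded_linear_blinfun_mult_left c]
    by (simp add: case_prod_beta')
  then have "continuous (at (s, y) within S \<times> UNIV) (\<lambda>(s, y). blinfun_mult_left (fx s y))"
    using s by (simp add: continuous_on_eq_continuous_within)
  from has_derivative_partialsI[OF ds dy this]
  show ?thesis
    by (simp add: p_eq case_prod_beta' mult.commute)
qed

section \<open>Transport equations on backward cones\<close>

definition solves_transport :: "real \<Rightarrow> (real \<times> real \<Rightarrow> real) \<Rightarrow> (real \<times> real \<Rightarrow> real) \<Rightarrow> bool" where
  "solves_transport T c f \<longleftrightarrow> (\<exists>ft fx. \<forall>p\<in>{0..<T} \<times> UNIV.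
     (f has_derivative (\<lambda>q. ft p * fst q + fx p * snd q)) (at p within {0..<T} \<times> UNIV) \<and>
     ft p + c p * fx p = 0)"

lemma solves_transport_uminus: "solves_transport T c f \<Longrightarrow> solves_transport T c (\<lambda>p. - f p)"
  unfolding solves_transport_def
proof (elim exE, intro exI ballI conjI)
  fix ft fx p
  assume f: "\<forall>p\<in>{0..<T} \<times> UNIV. (f has_derivative (\<lambda>q. ft p * fst q + fx p * snd q))
      (at p within {0..<T} \<times> UNIV) \<and> ft p + c p * fx p = 0"
    and p: "p \<in> {0..<T} \<times> (UNIV :: real set)"
  show "((\<lambda>p. - f p) has_derivative (\<lambda>q. - ft p * fst q + - fx p * snd q)) (at p within {0..<T} \<times> UNIV)"
    using has_derivative_minus[OF f[rule_format, OF p, THEN conjunct1]] by simp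
  show "- ft p + c p * - fx p = 0"
    using f[rule_format, OF p] by simp
qed

lemma solves_transport_of_partials:
  fixes f ft fx :: "real \<Rightarrow> real \<Rightarrow> real"
  assumes "\<forall>s\<in>{0..<T}. \<forall>y. ((\<lambda>s. f s y) has_real_derivative ft s y) (at s within {0..<T}) \<and>
      ((\<lambda>y. f s y) has_real_derivative fx s y) (at y)"
    and "continuous_on ({0..<T} \<times> UNIV) (\<lambda>(s, y). fx s y)"
    and "\<forall>p\<in>{0..<T} \<times> UNIV. ft (fst p) (snd p) + c p * fx (fst p) (snd p) = 0"
  shows "solves_transport T c (\<lambda>p. f (fst p) (snd p))"
  unfolding solves_transport_def
  using has_derivative_of_partials[OF assms(1,2)] assms(3)
  by (intro exI[of _ "\<lambda>p. ft (fst p) (snd p)"] exI[of _ "\<lambda>p. fx (fst p) (snd p)"]) auto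

lemma continuous_on_solves_transport:
  "solves_transport T c f \<Longrightarrow> continuous_on ({0..<T} \<times> UNIV) f"
  unfolding solves_transport_def continuous_on_eq_continuous_within
  using has_derivative_continuous by blast

lemma solves_transport_has_derivative_characteristic:
  assumes "solves_transport T c f" "0 < s" "s < T"
  shows "((\<lambda>\<delta>. f (s - \<delta>, y - \<delta> * c (s, y))) has_real_derivative 0) (at 0 within {0..s})"
proof -
  let ?D = "{0..<T} \<times> (UNIV :: real set)"
  define \<gamma> where "\<gamma> \<delta> = (s - \<delta>, y - \<delta> * c (s, y))" for \<delta>
  obtain ft fx where f: "(f has_derivative (\<lambda>q. ft (s, y) * fst q + fx (s, y) * snd q)) (at (s, y) within ?D)"
    and eq: "ft (s, y) = - c (s, y) * fx (s, y)"
    using assms unfolding solves_transport_def by (fastforce simp: eq_neg_iff_add_eq_0)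
  have "\<gamma> ` {0..s} \<subseteq> ?D"
    using assms by (auto simp: \<gamma>_def)
  then have "(f has_derivative (\<lambda>q. ft (s, y) * fst q + fx (s, y) * snd q)) (at (\<gamma> 0) within \<gamma> ` {0..s})"
    using has_derivative_subset[OF f] by (simp add: \<gamma>_def)
  with diff_chain_within have "(f \<circ> \<gamma> has_derivative
      (\<lambda>q. ft (s, y) * fst q + fx (s, y) * snd q) \<circ> (\<lambda>d. (- d, - d * c (s, y)))) (at 0 within {0..s})"
    unfolding \<gamma>_def by (auto intro!: derivative_eq_intros)
  moreover have "(\<lambda>q. ft (s, y) * fst q + fx (s, y) * snd q) \<circ> (\<lambda>d. (- d, - d * c (s, y))) = (*) 0"
    using eq by (auto simp: fun_eq_iff algebra_simps)
  ultimately show ?thesis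
    by (simp add: has_field_derivative_def \<gamma>_def o_def)
qed

definition backward_cone :: "real \<Rightarrow> real \<Rightarrow> real \<Rightarrow> real \<Rightarrow> (real \<times> real) set" where
  "backward_cone K t0 x0 \<tau> = {p. 0 \<le> fst p \<and> fst p \<le> \<tau> \<and> \<bar>snd p - x0\<bar> \<le> K * (t0 - fst p)}"

lemma closed_backward_cone: "closed (backward_cone K t0 x0 \<tau>)"
  unfolding backward_cone_def
  by (intro closed_Collect_conj closed_Collect_le continuous_intros)

lemma compact_backward_cone:
  assumes "0 \<le> K"
  shows "compact (backward_cone K t0 x0 \<tau>)"
proof -
  have "K * (t0 - s) \<le> K * t0" if "0 \<le> s" for s
    using assms that by (simp add: algebra_simps)
  then have "backward_cone K t0 x0 \<tau> \<subseteq> {0..\<tau>} \<times> {x0 - K * t0 .. x0 + K * t0}"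
    by (force simp: backward_cone_def abs_le_iff)
  then show ?thesis
    by (metis closed_backward_cone compact_Icc compact_Times compact_Int_closed inf.absorb_iff2)
qed

lemma backward_cone_subset_strip: "\<tau> < T \<Longrightarrow> backward_cone K t0 x0 \<tau> \<subseteq> {0..<T} \<times> UNIV"
  by (auto simp: backward_cone_def)

lemma backward_cone_mono: "\<tau>' \<le> \<tau> \<Longrightarrow> backward_cone K t0 x0 \<tau>' \<subseteq> backward_cone K t0 x0 \<tau>"
  by (auto simp: backward_cone_def)

lemma backward_cone_vertical:
  assumes "(\<tau>, y) \<in> backward_cone K t0 x0 \<tau>'" "0 \<le> K" "0 \<le> s" "s \<le> \<tau>"
  shows "(s, y) \<in> backward_cone K t0 x0 s"
  using assms mult_left_mono[of "t0 - \<tau>" "t0 - s" K] by (auto simp: backward_cone_def)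

lemma backward_cone_characteristic:
  assumes "(s, y) \<in> backward_cone K t0 x0 \<tau>" "\<bar>v\<bar> \<le> K" "0 \<le> h" "h \<le> s"
  shows "(s - h, y - h * v) \<in> backward_cone K t0 x0 \<tau>"
proof -
  have "\<bar>y - h * v - x0\<bar> \<le> \<bar>y - x0\<bar> + h * \<bar>v\<bar>"
    using assms(3) abs_triangle_ineq4[of "y - x0" "h * v"] by (simp add: abs_mult algebra_simps)
  also have "\<dots> \<le> K * (t0 - s) + h * K"
    using assms by (intro add_mono mult_left_mono) (auto simp: backward_cone_def)
  finally show ?thesis
    using assms by (auto simp: backward_cone_def algebra_simps)
qed

lemma solves_transport_backward_cone_ascent:
  assumes f: "solves_transport T c f" and p: "(s, y) \<in> backward_cone K t0 x0 \<tau>"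
    and "0 < s" "\<tau> < T" "\<bar>c (s, y)\<bar> \<le> K" "0 < \<epsilon>"
  shows "\<exists>q\<in>backward_cone K t0 x0 \<tau>. f (s, y) - \<epsilon> * s < f q - \<epsilon> * fst q"
proof -
  define \<gamma> where "\<gamma> \<delta> = (s - \<delta>, y - \<delta> * c (s, y))" for \<delta>
  have "s < T"
    using p \<open>\<tau> < T\<close> by (simp add: backward_cone_def)
  have "((\<lambda>\<delta>. f (\<gamma> \<delta>) - \<epsilon> * fst (\<gamma> \<delta>)) has_real_derivative 0 - \<epsilon> * (0 - 1)) (at 0 within {0..s})"
    using solves_transport_has_derivative_characteristic[OF f \<open>0 < s\<close> \<open>s < T\<close>, of y]
    unfolding \<gamma>_def by (auto intro!: derivative_eq_intros)
  then obtain d where "0 < d" and inc: "\<And>h. 0 < h \<Longrightarrow> h \<le> s \<Longrightarrow> h < d \<Longrightarrow>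
      f (\<gamma> 0) - \<epsilon> * fst (\<gamma> 0) < f (\<gamma> h) - \<epsilon> * fst (\<gamma> h)"
    using has_real_derivative_pos_inc_right[of _ _ 0] \<open>0 < \<epsilon>\<close> by fastforce
  define h where "h = min s (d / 2)"
  have h: "0 < h" "h \<le> s" "h < d"
    using \<open>0 < s\<close> \<open>0 < d\<close> by (auto simp: h_def)
  have "\<gamma> h \<in> backward_cone K t0 x0 \<tau>"
    unfolding \<gamma>_def using backward_cone_characteristic[OF p] assms(5) h by auto
  with inc[OF h] show ?thesis
    by (intro bexI[of _ "\<gamma> h"]) (simp_all add: \<gamma>_def)
qed

text \<open>Maximum principle on a cone whose slope dominates the characteristic speed: a maximum of
  \<open>f - \<epsilon> t\<close> away from the base would increase strictly backwards along the characteristic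
  through it, which stays inside the cone.\<close>
lemma solves_transport_backward_cone_le:
  assumes f: "solves_transport T c f" and "\<tau> < T" "0 \<le> K"
    and speed: "\<forall>p\<in>backward_cone K t0 x0 \<tau>. \<bar>c p\<bar> \<le> K"
    and base: "\<And>y. \<bar>y - x0\<bar> \<le> K * t0 \<Longrightarrow> f (0, y) \<le> A"
  shows "\<forall>p\<in>backward_cone K t0 x0 \<tau>. f p \<le> A"
proof (rule ccontr)
  let ?C = "backward_cone K t0 x0 \<tau>"
  assume "\<not> ?thesis"
  then obtain p0 where p0: "p0 \<in> ?C" "A < f p0"
    by force
  define \<epsilon> where "\<epsilon> = (f p0 - A) / (\<tau> + 1)"
  have "0 \<le> \<tau>"
    using p0 by (auto simp: backward_cone_def)
  with p0 have \<epsilon>: "0 < \<epsilon>" "\<epsilon> * \<tau> < f p0 - A"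
    by (auto simp: \<epsilon>_def field_simps)
  have "continuous_on ?C (\<lambda>q. f q - \<epsilon> * fst q)"
    using continuous_on_solves_transport[OF f] backward_cone_subset_strip[OF \<open>\<tau> < T\<close>]
    by (intro continuous_intros) (rule continuous_on_subset)
  then obtain s y where p: "(s, y) \<in> ?C"
    and max: "\<And>q. q \<in> ?C \<Longrightarrow> f q - \<epsilon> * fst q \<le> f (s, y) - \<epsilon> * s"
    using continuous_attains_sup[OF compact_backward_cone[OF \<open>0 \<le> K\<close>]] p0(1) by fastforce
  have "\<epsilon> * fst p0 \<le> \<epsilon> * \<tau>"
    using p0 \<epsilon> by (simp add: backward_cone_def)
  then have big: "A < f (s, y) - \<epsilon> * s"
    using max[OF p0(1)] \<epsilon> by linarith
  show False
  proof (cases "s = 0")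
    case True
    with base[of y] p big show False
      by (simp add: backward_cone_def)
  next
    case False
    then have "0 < s"
      using p by (simp add: backward_cone_def)
    then obtain q where "q \<in> ?C" "f (s, y) - \<epsilon> * s < f q - \<epsilon> * fst q"
      using solves_transport_backward_cone_ascent[OF f p _ \<open>\<tau> < T\<close> _ \<epsilon>(1)] speed p by blast
    with max show False
      by fastforce
  qed
qed

lemma solves_transport_backward_cone_abs_le:
  assumes "solves_transport T c f" "\<tau> < T" "0 \<le> K"
    and "\<forall>p\<in>backward_cone K t0 x0 \<tau>. \<bar>c p\<bar> \<le> K"
    and "\<And>y. \<bar>y - x0\<bar> \<le> K * t0 \<Longrightarrow> \<bar>f (0, y) - m\<bar> \<le> A"
  shows "\<forall>p\<in>backward_cone K t0 x0 \<tau>. \<bar>f p - m\<bar> \<le> A"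
proof -
  have "\<forall>p\<in>backward_cone K t0 x0 \<tau>. f p \<le> m + A"
    by (rule solves_transport_backward_cone_le[OF assms(1-4)]) (use assms(5) in force)
  moreover have "\<forall>p\<in>backward_cone K t0 x0 \<tau>. - f p \<le> - m + A"
    by (rule solves_transport_backward_cone_le[OF solves_transport_uminus[OF assms(1)] assms(2-4)])
      (use assms(5) in force)
  ultimately show ?thesis
    by (auto simp: abs_le_iff)
qed

lemma continuous_on_le_at_right_end:
  fixes \<phi> :: "real \<Rightarrow> real"
  assumes "continuous_on {a..b} \<phi>" "a < b" "\<And>s. s \<in> {a..<b} \<Longrightarrow> \<phi> s \<le> A"
  shows "\<phi> b \<le> A"
proof (rule tendsto_upperbound)
  show "(\<phi> \<longlongrightarrow> \<phi> b) (at_left b)"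
    using assms(1,2) by (simp add: continuous_on_Icc_at_leftD)
  show "\<forall>\<^sub>F s in at_left b. \<phi> s \<le> A"
    using eventually_at_left_real[OF assms(2)] by eventually_elim (use assms(3) in auto)
qed (simp add: trivial_limit_at_left_real)

lemma backward_cone_earliest_point:
  fixes g :: "real \<times> real \<Rightarrow> real"
  assumes "0 \<le> K" "continuous_on (backward_cone K t0 x0 \<tau>) g"
    and "\<exists>p\<in>backward_cone K t0 x0 \<tau>. B \<le> g p"
  obtains s y where "(s, y) \<in> backward_cone K t0 x0 \<tau>" "B \<le> g (s, y)"
    and "\<And>p. p \<in> backward_cone K t0 x0 \<tau> \<Longrightarrow> fst p < s \<Longrightarrow> g p < B"
proof -
  define Bad where "Bad = {p \<in> backward_cone K t0 x0 \<tau>. B \<le> g p}"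
  have "closed Bad"
    unfolding Bad_def using continuous_on_closed_Collect_le[OF continuous_on_const assms(2)]
    by (simp add: closed_backward_cone)
  moreover have "Bad = backward_cone K t0 x0 \<tau> \<inter> Bad"
    by (auto simp: Bad_def)
  ultimately have "compact Bad"
    using compact_Int_closed[OF compact_backward_cone[OF assms(1)]] by metis
  moreover have "Bad \<noteq> {}"
    using assms(3) by (auto simp: Bad_def)
  ultimately obtain pb where "pb \<in> Bad" and first: "\<And>q. q \<in> Bad \<Longrightarrow> fst pb \<le> fst q"
    using continuous_attains_inf[of Bad fst] continuous_on_fst[OF continuous_on_id] by blast
  moreover have "g p < B" if "p \<in> backward_cone K t0 x0 \<tau>" "fst p < fst pb" for p
    using that first[of p] by (force simp: Bad_def)
  ultimately show ?thesis
    using that[of "fst pb" "snd pb"] by (simp add: Bad_def)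
qed

lemma backward_cone_continuity_argument:
  fixes g :: "real \<times> real \<Rightarrow> real"
  assumes cont: "continuous_on (backward_cone K t0 x0 t0) g" and "0 \<le> K" "A < B"
    and base: "\<And>y. (0, y) \<in> backward_cone K t0 x0 t0 \<Longrightarrow> g (0, y) \<le> A"
    and improve: "\<And>\<tau>. 0 \<le> \<tau> \<Longrightarrow> \<tau> \<le> t0 \<Longrightarrow> \<forall>p\<in>backward_cone K t0 x0 \<tau>. g p < B \<Longrightarrow>
      \<forall>p\<in>backward_cone K t0 x0 \<tau>. g p \<le> A"
  shows "\<forall>p\<in>backward_cone K t0 x0 t0. g p \<le> A"
proof (cases "0 \<le> t0")
  case True
  let ?C = "backward_cone K t0 x0"
  have "\<forall>p\<in>?C t0. g p < B"
  proof (rule ccontr)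
    assume "\<not> ?thesis"
    then have "\<exists>p\<in>?C t0. B \<le> g p"
      by (auto simp: not_less)
    then obtain \<tau> yb where pb: "(\<tau>, yb) \<in> ?C t0" "B \<le> g (\<tau>, yb)"
      and first: "\<And>p. p \<in> ?C t0 \<Longrightarrow> fst p < \<tau> \<Longrightarrow> g p < B"
      using backward_cone_earliest_point[OF \<open>0 \<le> K\<close> cont] by blast
    then have \<tau>: "0 \<le> \<tau>" "\<tau> \<le> t0"
      by (auto simp: backward_cone_def)
    have "0 < \<tau>"
    proof (rule ccontr)
      assume "\<not> 0 < \<tau>"
      with \<tau> pb base[of yb] \<open>A < B\<close> show False
        by auto
    qed
    have on_path: "(s, yb) \<in> ?C s" "(s, yb) \<in> ?C t0" if "s \<in> {0..\<tau>}" for s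
      using backward_cone_vertical[OF pb(1) \<open>0 \<le> K\<close>, of s] backward_cone_mono[of s t0] that \<tau> by auto
    have "g (s, yb) \<le> A" if "s \<in> {0..<\<tau>}" for s
    proof -
      have "\<forall>p\<in>?C s. g p < B"
        using first backward_cone_mono[of s t0] that \<tau> by (force simp: backward_cone_def)
      then show ?thesis
        using improve[of s] that \<tau> on_path(1)[of s] by auto
    qed
    moreover have "continuous_on {0..\<tau>} (\<lambda>s. g (s, yb))"
      using on_path(2) by (intro continuous_on_compose2[OF cont]) (auto intro!: continuous_intros)
    ultimately have "g (\<tau>, yb) \<le> A"
      using continuous_on_le_at_right_end[of 0 \<tau>] \<open>0 < \<tau>\<close> by blast
    then show False
      using pb \<open>A < B\<close> by simp
  qed
  then show ?thesis
    using improve[of t0] True by blast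
qed (auto simp: backward_cone_def)

lemma eventually_all_near_at_top:
  "eventually P at_top \<Longrightarrow> eventually (\<lambda>x. \<forall>y. \<bar>y - x\<bar> \<le> r \<longrightarrow> P y) (at_top :: real filter)"
proof -
  assume "eventually P at_top"
  then obtain N where "\<And>y. N \<le> y \<Longrightarrow> P y"
    unfolding eventually_at_top_linorder by blast
  then have "\<forall>x\<ge>N + r. \<forall>y. \<bar>y - x\<bar> \<le> r \<longrightarrow> P y"
    by (auto simp: abs_le_iff)
  then show ?thesis
    unfolding eventually_at_top_linorder by blast
qed

lemma eventually_all_near_at_bot:
  "eventually P at_bot \<Longrightarrow> eventually (\<lambda>x. \<forall>y. \<bar>y - x\<bar> \<le> r \<longrightarrow> P y) (at_bot :: real filter)"
proof -
  assume "eventually P at_bot"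
  then obtain N where "\<And>y. y \<le> N \<Longrightarrow> P y"
    unfolding eventually_at_bot_linorder by blast
  then have "\<forall>x\<le>N - r. \<forall>y. \<bar>y - x\<bar> \<le> r \<longrightarrow> P y"
    by (auto simp: abs_le_iff)
  then show ?thesis
    unfolding eventually_at_bot_linorder by blast
qed

lemma solves_transport_tendsto:
  assumes f: "solves_transport T c f" and "0 \<le> t0" "t0 < T" "0 \<le> K"
    and speed: "\<And>x0. \<forall>p\<in>backward_cone K t0 x0 t0. \<bar>c p\<bar> \<le> K"
    and lim: "((\<lambda>y. f (0, y)) \<longlongrightarrow> m) F"
    and F: "\<And>P. eventually P F \<Longrightarrow> eventually (\<lambda>x. \<forall>y. \<bar>y - x\<bar> \<le> K * t0 \<longrightarrow> P y) F"
  shows "((\<lambda>x. f (t0, x)) \<longlongrightarrow> m) F"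
proof (rule tendstoI)
  fix e :: real
  assume "0 < e"
  then have "eventually (\<lambda>y. dist (f (0, y)) m < e / 2) F"
    by (intro tendstoD[OF lim]) simp
  then have "eventually (\<lambda>x. \<forall>y. \<bar>y - x\<bar> \<le> K * t0 \<longrightarrow> dist (f (0, y)) m < e / 2) F"
    by (rule F)
  then show "eventually (\<lambda>x. dist (f (t0, x)) m < e) F"
  proof eventually_elim
    fix x0
    assume near: "\<forall>y. \<bar>y - x0\<bar> \<le> K * t0 \<longrightarrow> dist (f (0, y)) m < e / 2"
    have "\<bar>f (0, y) - m\<bar> \<le> e / 2" if "\<bar>y - x0\<bar> \<le> K * t0" for y
      using near[rule_format, OF that] by (simp add: dist_real_def)
    then have "\<forall>p\<in>backward_cone K t0 x0 t0. \<bar>f p - m\<bar> \<le> e / 2"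
      using solves_transport_backward_cone_abs_le[OF f \<open>t0 < T\<close> \<open>0 \<le> K\<close> speed] by blast
    moreover have "(t0, x0) \<in> backward_cone K t0 x0 t0"
      using \<open>0 \<le> t0\<close> by (simp add: backward_cone_def)
    ultimately show "dist (f (t0, x0)) m < e"
      using \<open>0 < e\<close> by (force simp: dist_real_def)
  qed
qed

section \<open>Riemann invariants of problem (P)\<close>

text \<open>The speed \<open>Q (v p)\<close> is bounded by a priori unknown values of \<open>R\<close> and \<open>S\<close>; bounding the
  invariants by their initial bound \<open>M\<close> on cones of slope \<open>M + 2\<close> closes the loop.\<close>
lemma riemann_invariants_speed_bound:
  fixes R S v :: "real \<times> real \<Rightarrow> real"
  assumes R: "solves_transport T (\<lambda>p. Q (v p)) R" and S: "solves_transport T (\<lambda>p. - Q (v p)) S"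
    and v: "\<And>p. p \<in> {0..<T} \<times> UNIV \<Longrightarrow> L (v p) = (S p - R p) / 2"
    and R0: "\<And>y. \<bar>R (0, y)\<bar> \<le> M" and S0: "\<And>y. \<bar>S (0, y)\<bar> \<le> M"
    and "t0 < T"
  shows "\<forall>p\<in>backward_cone (M + 2) t0 x0 t0. \<bar>Q (v p)\<bar> \<le> M + 2"
proof -
  let ?C = "backward_cone (M + 2) t0 x0"
  have "0 \<le> M"
    using R0[of 0] by linarith
  have speed: "\<bar>Q (v p)\<bar> \<le> M + 2" if "p \<in> {0..<T} \<times> UNIV" "max \<bar>R p\<bar> \<bar>S p\<bar> < M + 1" for p
  proof -
    have "\<bar>L (v p)\<bar> < M + 1"
      unfolding v[OF that(1)] using that(2) abs_triangle_ineq4[of "S p" "R p"] by auto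
    then show ?thesis
      using Q_le_1_plus_abs_L[of "v p"] Q_ge_1[of "v p"] by simp
  qed
  have "\<forall>p\<in>?C t0. max \<bar>R p\<bar> \<bar>S p\<bar> \<le> M"
  proof (rule backward_cone_continuity_argument[where B = "M + 1"])
    show "continuous_on (?C t0) (\<lambda>p. max \<bar>R p\<bar> \<bar>S p\<bar>)"
      using backward_cone_subset_strip[OF \<open>t0 < T\<close>]
        continuous_on_subset[OF continuous_on_solves_transport[OF R]]
        continuous_on_subset[OF continuous_on_solves_transport[OF S]]
      by (intro continuous_intros) blast+
  next
    fix \<tau>
    assume "0 \<le> \<tau>" "\<tau> \<le> t0" and small: "\<forall>p\<in>?C \<tau>. max \<bar>R p\<bar> \<bar>S p\<bar> < M + 1"
    then have "\<tau> < T" "?C \<tau> \<subseteq> {0..<T} \<times> UNIV"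
      using \<open>t0 < T\<close> backward_cone_subset_strip[of \<tau> T] by auto
    then have "\<forall>p\<in>?C \<tau>. \<bar>Q (v p)\<bar> \<le> M + 2"
      using small speed by blast
    then have "\<forall>p\<in>?C \<tau>. \<bar>R p - 0\<bar> \<le> M" "\<forall>p\<in>?C \<tau>. \<bar>S p - 0\<bar> \<le> M"
      using solves_transport_backward_cone_abs_le[OF R \<open>\<tau> < T\<close>, of "M + 2" t0 x0 0 M]
        solves_transport_backward_cone_abs_le[OF S \<open>\<tau> < T\<close>, of "M + 2" t0 x0 0 M]
        \<open>0 \<le> M\<close> R0 S0 by simp_all
    then show "\<forall>p\<in>?C \<tau>. max \<bar>R p\<bar> \<bar>S p\<bar> \<le> M"
      by simp
  qed (use \<open>0 \<le> M\<close> R0 S0 in auto)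
  then show ?thesis
    using speed backward_cone_subset_strip[OF \<open>t0 < T\<close>] by force
qed

lemma classical_solution_P_second_derivatives:
  assumes "classical_solution_P w0 T w wt wx"
  obtains wtt wtx wxx where "\<forall>t\<in>{0..<T}. \<forall>x.
      ((\<lambda>s. wt s x) has_real_derivative wtt t x) (at t within {0..<T}) \<and>
      ((\<lambda>y. wt t y) has_real_derivative wtx t x) (at x) \<and>
      ((\<lambda>s. wx s x) has_real_derivative wtx t x) (at t within {0..<T}) \<and>
      ((\<lambda>y. wx t y) has_real_derivative wxx t x) (at x) \<and>
      wtt t x = (Q (wx t x))\<^sup>2 * wxx t x"
    and "continuous_on ({0..<T} \<times> UNIV) (\<lambda>(t, x). wx t x)"
      "continuous_on ({0..<T} \<times> UNIV) (\<lambda>(t, x). wtx t x)"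
      "continuous_on ({0..<T} \<times> UNIV) (\<lambda>(t, x). wxx t x)"
proof -
  have d1: "\<forall>t\<in>{0..<T}. \<forall>x. ((\<lambda>s. w s x) has_real_derivative wt t x) (at t within {0..<T}) \<and>
      ((\<lambda>y. w t y) has_real_derivative wx t x) (at x)"
    using assms unfolding classical_solution_P_def by blast
  obtain wtt wtx wxt wxx where d2: "\<forall>t\<in>{0..<T}. \<forall>x.
      ((\<lambda>s. wt s x) has_real_derivative wtt t x) (at t within {0..<T}) \<and>
      ((\<lambda>y. wt t y) has_real_derivative wtx t x) (at x) \<and>
      ((\<lambda>s. wx s x) has_real_derivative wxt t x) (at t within {0..<T}) \<and>
      ((\<lambda>y. wx t y) has_real_derivative wxx t x) (at x) \<and>
      wtt t x - (Q (wx t x))\<^sup>2 * wxx t x = 0"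
    and cont: "continuous_on ({0..<T} \<times> UNIV) (\<lambda>(t, x). wx t x)"
      "continuous_on ({0..<T} \<times> UNIV) (\<lambda>(t, x). wtx t x)"
      "continuous_on ({0..<T} \<times> UNIV) (\<lambda>(t, x). wxt t x)"
      "continuous_on ({0..<T} \<times> UNIV) (\<lambda>(t, x). wxx t x)"
    using assms unfolding classical_solution_P_def by blast
  have "wtx t x = wxt t x" if "t \<in> {0..<T}" for t x
    using mixed_partials_eq[OF d1 _ cont(2,3) that] d2 by blast
  then have "\<forall>t\<in>{0..<T}. \<forall>x.
      ((\<lambda>s. wt s x) has_real_derivative wtt t x) (at t within {0..<T}) \<and>
      ((\<lambda>y. wt t y) has_real_derivative wtx t x) (at x) \<and>
      ((\<lambda>s. wx s x) has_real_derivative wtx t x) (at t within {0..<T}) \<and>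
      ((\<lambda>y. wx t y) has_real_derivative wxx t x) (at x) \<and>
      wtt t x = (Q (wx t x))\<^sup>2 * wxx t x"
    using d2 by (metis eq_iff_diff_eq_0)
  then show ?thesis
    using cont(1,2,4) by (rule that)
qed

lemma classical_solution_P_riemann_invariant:
  assumes sol: "classical_solution_P w0 T w wt wx" and "\<sigma> * \<sigma> = 1"
  shows "solves_transport T (\<lambda>p. - \<sigma> * Q (wx (fst p) (snd p)))
    (\<lambda>p. wt (fst p) (snd p) + \<sigma> * L (wx (fst p) (snd p)))"
proof -
  let ?D = "{0..<T} \<times> (UNIV :: real set)"
  obtain wtt wtx wxx where d: "\<forall>t\<in>{0..<T}. \<forall>x.
      ((\<lambda>s. wt s x) has_real_derivative wtt t x) (at t within {0..<T}) \<and>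
      ((\<lambda>y. wt t y) has_real_derivative wtx t x) (at x) \<and>
      ((\<lambda>s. wx s x) has_real_derivative wtx t x) (at t within {0..<T}) \<and>
      ((\<lambda>y. wx t y) has_real_derivative wxx t x) (at x) \<and>
      wtt t x = (Q (wx t x))\<^sup>2 * wxx t x"
    and cont: "continuous_on ?D (\<lambda>(t, x). wx t x)" "continuous_on ?D (\<lambda>(t, x). wtx t x)"
      "continuous_on ?D (\<lambda>(t, x). wxx t x)"
    by (rule classical_solution_P_second_derivatives[OF sol])
  define ft where "ft s y = wtt s y + \<sigma> * (Q (wx s y) * wtx s y)" for s y
  define fx where "fx s y = wtx s y + \<sigma> * (Q (wx s y) * wxx s y)" for s y
  have "\<forall>s\<in>{0..<T}. \<forall>y.
      ((\<lambda>s. wt s y + \<sigma> * L (wx s y)) has_real_derivative ft s y) (at s within {0..<T}) \<and>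
      ((\<lambda>y. wt s y + \<sigma> * L (wx s y)) has_real_derivative fx s y) (at y)"
  proof (intro ballI allI conjI)
    fix s y
    assume "s \<in> {0..<T}"
    then have "((\<lambda>s. wt s y) has_real_derivative wtt s y) (at s within {0..<T})"
      "((\<lambda>y. wt s y) has_real_derivative wtx s y) (at y)"
      "((\<lambda>s. wx s y) has_real_derivative wtx s y) (at s within {0..<T})"
      "((\<lambda>y. wx s y) has_real_derivative wxx s y) (at y)"
      using d by blast+
    then show "((\<lambda>s. wt s y + \<sigma> * L (wx s y)) has_real_derivative ft s y) (at s within {0..<T})"
      and "((\<lambda>y. wt s y + \<sigma> * L (wx s y)) has_real_derivative fx s y) (at y)"
      unfolding ft_def fx_def by (auto intro!: derivative_eq_intros)
  qed
  moreover have "continuous_on ?D (\<lambda>(s, y). fx s y)"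
    using cont unfolding fx_def Q_def case_prod_beta' by (intro continuous_intros)
  moreover have "\<forall>p\<in>?D. ft (fst p) (snd p) + - \<sigma> * Q (wx (fst p) (snd p)) * fx (fst p) (snd p) = 0"
  proof
    fix p :: "real \<times> real"
    obtain s y where p: "p = (s, y)"
      by (cases p)
    assume "p \<in> ?D"
    then have "wtt s y = (Q (wx s y))\<^sup>2 * wxx s y"
      using d by (auto simp: p)
    with \<open>\<sigma> * \<sigma> = 1\<close> show "ft (fst p) (snd p) + - \<sigma> * Q (wx (fst p) (snd p)) * fx (fst p) (snd p) = 0"
      unfolding p ft_def fx_def by (simp add: algebra_simps power2_eq_square)
  qed
  ultimately show ?thesis
    by (rule solves_transport_of_partials[where f = "\<lambda>s y. wt s y + \<sigma> * L (wx s y)"])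
qed

lemma classical_solution_P_initial:
  assumes "classical_solution_P w0 T w wt wx" "0 < T"
    and "\<And>x. (w0 has_real_derivative w0' x) (at x)"
  shows "wx 0 x = w0' x" "wt 0 x = 0"
proof -
  have "0 \<in> {0..<T}"
    using assms(2) by simp
  then have "((\<lambda>y. w 0 y) has_real_derivative wx 0 x) (at x)"
    using assms(1) unfolding classical_solution_P_def by blast
  moreover have "w 0 = w0"
    using assms(1) unfolding classical_solution_P_def by (simp add: fun_eq_iff)
  ultimately show "wx 0 x = w0' x"
    using assms(3) DERIV_unique by metis
  show "wt 0 x = 0"
    using assms(1) unfolding classical_solution_P_def by blast
qed

lemma classical_solution_P_tendsto:
  assumes sol: "classical_solution_P w0 T w wt wx"
    and w0': "\<And>x. (w0 has_real_derivative w0' x) (at x)" "bounded (range w0')"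
    and lim: "(w0' \<longlongrightarrow> a) F"
    and F: "\<And>P r. eventually P F \<Longrightarrow> eventually (\<lambda>x. \<forall>y. \<bar>y - x\<bar> \<le> r \<longrightarrow> P y) F"
    and t0: "t0 \<in> {0..<T}"
  shows "(wx t0 \<longlongrightarrow> a) F \<and> (wt t0 \<longlongrightarrow> 0) F"
proof -
  obtain B where B: "\<And>x. \<bar>w0' x\<bar> \<le> B"
    using w0'(2) unfolding bounded_iff by auto
  define R where "R p = wt (fst p) (snd p) - L (wx (fst p) (snd p))" for p
  define S where "S p = wt (fst p) (snd p) + L (wx (fst p) (snd p))" for p
  have R: "solves_transport T (\<lambda>p. Q (wx (fst p) (snd p))) R"
    using classical_solution_P_riemann_invariant[OF sol, of "- 1"] unfolding R_def[abs_def] by simp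
  have S: "solves_transport T (\<lambda>p. - Q (wx (fst p) (snd p))) S"
    using classical_solution_P_riemann_invariant[OF sol, of 1] unfolding S_def[abs_def] by simp
  have R0: "R (0, y) = - L (w0' y)" and S0: "S (0, y) = L (w0' y)" for y
    using classical_solution_P_initial[OF sol _ w0'(1)] t0 by (auto simp: R_def S_def)
  have "0 \<le> L B"
    using abs_L_le[OF B, of 0] by simp
  have "\<forall>p\<in>backward_cone (L B + 2) t0 x0 t0. \<bar>Q (wx (fst p) (snd p))\<bar> \<le> L B + 2" for x0
  proof (rule riemann_invariants_speed_bound[OF R S])
    show "L (wx (fst p) (snd p)) = (S p - R p) / 2" for p
      by (simp add: R_def S_def)
    show "\<bar>R (0, y)\<bar> \<le> L B" "\<bar>S (0, y)\<bar> \<le> L B" for y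
      using abs_L_le[OF B] by (simp_all add: R0 S0)
  qed (use t0 in simp)
  then have "((\<lambda>x. R (t0, x)) \<longlongrightarrow> - L a) F" "((\<lambda>x. S (t0, x)) \<longlongrightarrow> L a) F"
    using solves_transport_tendsto[OF R, of t0 "L B + 2"] solves_transport_tendsto[OF S, of t0 "L B + 2"]
      tendsto_minus[OF isCont_tendsto_compose[OF isCont_L lim]] isCont_tendsto_compose[OF isCont_L lim]
      F t0 \<open>0 \<le> L B\<close> by (simp_all add: R0 S0)
  then have "((\<lambda>x. (S (t0, x) - R (t0, x)) / 2) \<longlongrightarrow> L a) F"
    and "((\<lambda>x. (R (t0, x) + S (t0, x)) / 2) \<longlongrightarrow> 0) F"
    by (auto intro: tendsto_eq_intros)
  then show ?thesis
    by (auto simp: R_def S_def intro: tendsto_of_tendsto_L)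
qed

theorem mainTheorem1:
  fixes w0 w0' w0'' :: "real \<Rightarrow> real"
    and w wt wx :: "real \<Rightarrow> real \<Rightarrow> real"
    and T a b :: real
  assumes "\<And>x. (w0 has_real_derivative w0' x) (at x)"
    and "\<And>x. (w0' has_real_derivative w0'' x) (at x)"
    and "continuous_on UNIV w0''"
    and "bounded (range w0')"
    and "(w0' \<longlongrightarrow> a) at_top"
    and "(w0' \<longlongrightarrow> b) at_bot"
    and "classical_solution_P w0 T w wt wx"
  shows "\<forall>t\<in>{0..<T}.
           (wx t \<longlongrightarrow> a) at_top \<and> (wx t \<longlongrightarrow> b) at_bot \<and>
           (wt t \<longlongrightarrow> 0) at_top \<and> (wt t \<longlongrightarrow> 0) at_bot"
proof
  fix t
  assume t: "t \<in> {0..<T}"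
  have "(wx t \<longlongrightarrow> a) at_top \<and> (wt t \<longlongrightarrow> 0) at_top"
    by (rule classical_solution_P_tendsto[OF assms(7,1,4,5) eventually_all_near_at_top t])
  moreover have "(wx t \<longlongrightarrow> b) at_bot \<and> (wt t \<longlongrightarrow> 0) at_bot"
    by (rule classical_solution_P_tendsto[OF assms(7,1,4,6) eventually_all_near_at_bot t])
  ultimately show "(wx t \<longlongrightarrow> a) at_top \<and> (wx t \<longlongrightarrow> b) at_bot \<and>
      (wt t \<longlongrightarrow> 0) at_top \<and> (wt t \<longlongrightarrow> 0) at_bot"
    by blast
qed

end
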